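(* Let $n\ge1$ and $\gamma=0$ (so $\beta=1$). Consider the problem of finding $\ell,R>0$ and $U:[0,R]\to[0,\infty)$, continuous on $[0,R]$ and $C^2$ on $[0,R)$, such that $$U''+\Big(\frac{n-1}{r}-\frac r2\Big)U'+\frac12U=0\ \text{ in }(0,R),\quad U(0)=\ell,\ U'(0)=0,\quad U(R)=0,\ U'(R)=-\sqrt2.$$ This problem has exactly one solution $(\ell,R,U)$, given by $U(r)=\ell\,\mathbf M(-\tfrac12,\tfrac n2,\tfrac{r^2}{4})$, $R=2\sqrt{s_\star}$ and $\frac1\ell=-\sqrt{\frac{s_\star}{2}}\,\frac{d}{ds}\mathbf M(-\tfrac12,\tfrac n2,s)\big|_{s=s_\star}$, where $s_\star>0$ is the unique positive zero of $s\mapsto\mathbf M(-\tfrac12,\tfrac n2,s)$.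
   Context: $\mathbf M(a,b,s)=\sum_{k\ge0}\frac{(a)_k}{(b)_k}\frac{s^k}{k!}$ is Kummer's confluent hypergeometric function ($(a)_k$ the Pochhammer symbol). $U'(R)$ is the left derivative at $R$. (This is the profile equation for radial self-similar solutions $u(x,t)=|t|^{\beta/2}U(|t|^{-1/2}|x|)$, $t<0$, with $U$ extended by zero for $r\ge R$.) *)

theory Defs
  imports "HOL-Analysis.Analysis"
begin

definition kummerM :: "real \<Rightarrow> real \<Rightarrow> real \<Rightarrow> real" where
  "kummerM a b s = (\<Sum>k. pochhammer a k / pochhammer b k * s ^ k / fact k)"

definition profile_sol :: "nat \<Rightarrow> real \<Rightarrow> real \<Rightarrow> (real \<Rightarrow> real) \<Rightarrow> bool" where
  "profile_sol n l R U \<longleftrightarrow>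
     l > 0 \<and> R > 0 \<and>
     (\<forall>r\<in>{0..R}. U r \<ge> 0) \<and>
     continuous_on {0..R} U \<and>
     (\<exists>U1 U2.
        (\<forall>r\<in>{0..<R}. (U has_real_derivative U1 r) (at r within {0..<R})) \<and>
        (\<forall>r\<in>{0..<R}. (U1 has_real_derivative U2 r) (at r within {0..<R})) \<and>
        continuous_on {0..<R} U2 \<and>
        (\<forall>r\<in>{0<..<R}. U2 r + ((real n - 1) / r - r / 2) * U1 r + U r / 2 = 0) \<and>
        U1 0 = 0) \<and>
     U 0 = l \<and> U R = 0 \<and>
     (U has_real_derivative (- sqrt 2)) (at_left R)"

end

theory Submission
  imports Defs
begin

text \<open>
  With s = r^2/4 the profile equation becomes Kummer's equation s M'' + (n/2 - s) M' + M/2 = 0,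
  so V(r) = M(-1/2, n/2, r^2/4) solves it with V(0) = 1 and V'(0) = 0. The contiguous relation
  M'(a, b, s) = (a/b) M(a+1, b+1, s), together with M(1/2, n/2 + 1, s) >= 1 for s >= 0, shows that
  M(-1/2, n/2, .) decreases on [0, infinity) with slope at most -1/n; hence it has exactly one
  positive zero s*, and l V is nonnegative on [0, 2 sqrt s*].

  Conversely, if U solves the problem then W = U - l V solves the same linear equation with zero
  data at the singular point r = 0, and the energy (W'^2/2 + W^2/4) e^(-R r) is nonincreasing on
  [0, R), so U = l V. Now U(R) = 0 forces R^2/4 = s*, and U'(R) = -sqrt 2 determines l.
\<close>

section \<open>Kummer's function as a power series\<close>

lemma deriv_power_series:
  fixes c :: "nat \<Rightarrow> real"
  assumes "\<And>x. summable (\<lambda>k. c k * x ^ k)"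
  shows "deriv (\<lambda>x. \<Sum>k. c k * x ^ k) = (\<lambda>x. \<Sum>k. diffs c k * x ^ k)"
  using termdiffs_strong_converges_everywhere[OF assms] by (intro ext DERIV_imp_deriv)

lemma power_series_x_times_diffs_sums:
  fixes c :: "nat \<Rightarrow> real"
  assumes "summable (\<lambda>k. diffs c k * x ^ k)"
  shows "(\<lambda>k. real k * c k * x ^ k) sums (x * (\<Sum>k. diffs c k * x ^ k))"
proof -
  have "(\<lambda>k. x * (diffs c k * x ^ k)) sums (x * (\<Sum>k. diffs c k * x ^ k))"
    using assms by (intro sums_mult summable_sums)
  moreover have "(\<lambda>k. x * (diffs c k * x ^ k)) = (\<lambda>k. real (Suc k) * c (Suc k) * x ^ Suc k)"
    by (auto simp: diffs_def)
  ultimately show ?thesis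
    using sums_Suc_iff[of "\<lambda>k. real k * c k * x ^ k"] by simp
qed

definition kummer_coeff :: "real \<Rightarrow> real \<Rightarrow> nat \<Rightarrow> real" where
  "kummer_coeff a b k = pochhammer a k / (pochhammer b k * fact k)"

lemma kummerM_eq_suminf: "kummerM a b s = (\<Sum>k. kummer_coeff a b k * s ^ k)"
  unfolding kummerM_def kummer_coeff_def by (simp add: field_simps)

lemma kummer_coeff_0 [simp]: "kummer_coeff a b 0 = 1"
  by (simp add: kummer_coeff_def)

lemma abs_pochhammer_le:
  fixes a b :: real
  assumes "\<bar>a\<bar> \<le> b"
  shows "\<bar>pochhammer a k\<bar> \<le> pochhammer b k"
proof (induction k)
  case (Suc k)
  have "\<bar>pochhammer a k\<bar> * \<bar>a + real k\<bar> \<le> pochhammer b k * (b + real k)"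
    using assms Suc by (intro mult_mono) auto
  then show ?case by (simp add: pochhammer_rec' abs_mult mult.commute)
qed simp

lemma abs_kummer_coeff_le:
  assumes "\<bar>a\<bar> \<le> b"
  shows "\<bar>kummer_coeff a b k\<bar> \<le> inverse (fact k)"
proof -
  have "\<bar>pochhammer a k\<bar> \<le> pochhammer b k"
    using assms by (rule abs_pochhammer_le)
  moreover have "0 \<le> pochhammer b k"
    using abs_ge_zero calculation by (rule order_trans)
  ultimately show ?thesis
    by (auto simp: kummer_coeff_def abs_mult divide_le_eq field_split_simps)
qed

lemma summable_kummer:
  assumes "\<bar>a\<bar> \<le> b"
  shows "summable (\<lambda>k. kummer_coeff a b k * s ^ k)"
proof (rule summable_comparison_test'[OF summable_exp[of "\<bar>s\<bar>"]])
  show "norm (kummer_coeff a b k * s ^ k) \<le> inverse (fact k) * \<bar>s\<bar> ^ k" for k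
    using abs_kummer_coeff_le[OF assms, of k]
    by (simp add: abs_mult power_abs mult_right_mono)
qed

text \<open>No hypothesis on b: for b = 0 both sides vanish because x / 0 = 0.\<close>

lemma diffs_kummer_coeff: "diffs (kummer_coeff a b) k = a / b * kummer_coeff (a + 1) (b + 1) k"
  by (simp add: diffs_def kummer_coeff_def pochhammer_rec field_simps del: of_nat_Suc)

lemma kummer_coeff_Suc:
  assumes "b > 0"
  shows "(real k + 1) * (b + real k) * kummer_coeff a b (Suc k) = (a + real k) * kummer_coeff a b k"
proof -
  have "(real k + 1) * (b + real k) \<noteq> 0"
    using assms by (simp add: add_pos_nonneg)
  moreover have "kummer_coeff a b (Suc k) = (a + real k) * kummer_coeff a b k / ((real k + 1) * (b + real k))"
    by (simp add: kummer_coeff_def pochhammer_rec' ac_simps)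
  ultimately show ?thesis
    by simp
qed

lemma kummerM_has_real_derivative:
  assumes "\<bar>a\<bar> \<le> b"
  shows "(kummerM a b has_real_derivative deriv (kummerM a b) s) (at s)"
proof -
  have "kummerM a b = (\<lambda>x. \<Sum>k. kummer_coeff a b k * x ^ k)"
    by (intro ext kummerM_eq_suminf)
  then show ?thesis
    using termdiffs_strong_converges_everywhere[OF summable_kummer[OF assms]]
    by (metis DERIV_imp_deriv)
qed

lemma deriv_kummerM:
  assumes "\<bar>a\<bar> \<le> b"
  shows "deriv (kummerM a b) s = a / b * kummerM (a + 1) (b + 1) s"
proof -
  have "\<bar>a + 1\<bar> \<le> b + 1"
    using assms by linarith
  then have "(\<lambda>k. a / b * (kummer_coeff (a + 1) (b + 1) k * s ^ k)) sums (a / b * kummerM (a + 1) (b + 1) s)"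
    unfolding kummerM_eq_suminf by (intro sums_mult summable_sums summable_kummer)
  moreover have "kummerM a b = (\<lambda>x. \<Sum>k. kummer_coeff a b k * x ^ k)"
    by (intro ext kummerM_eq_suminf)
  ultimately show ?thesis
    using deriv_power_series[OF summable_kummer[OF assms]]
    by (simp add: diffs_kummer_coeff sums_iff mult.assoc)
qed

lemma deriv_kummerM_has_real_derivative:
  assumes "\<bar>a\<bar> \<le> b"
  shows "(deriv (kummerM a b) has_real_derivative deriv (deriv (kummerM a b)) s) (at s)"
    and "deriv (deriv (kummerM a b)) s = a / b * deriv (kummerM (a + 1) (b + 1)) s"
proof -
  have "\<bar>a + 1\<bar> \<le> b + 1"
    using assms by linarith
  then have "((\<lambda>s. a / b * kummerM (a + 1) (b + 1) s) has_real_derivative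
      a / b * deriv (kummerM (a + 1) (b + 1)) s) (at s)"
    by (intro DERIV_cmult kummerM_has_real_derivative)
  moreover have "deriv (kummerM a b) = (\<lambda>s. a / b * kummerM (a + 1) (b + 1) s)"
    using deriv_kummerM[OF assms] by (rule ext)
  ultimately show "(deriv (kummerM a b) has_real_derivative deriv (deriv (kummerM a b)) s) (at s)"
    and "deriv (deriv (kummerM a b)) s = a / b * deriv (kummerM (a + 1) (b + 1)) s"
    by (simp_all add: DERIV_imp_deriv)
qed

lemma isCont_deriv_deriv_kummerM:
  assumes "\<bar>a\<bar> \<le> b"
  shows "isCont (deriv (deriv (kummerM a b))) s"
proof -
  have "\<bar>a + 1\<bar> \<le> b + 1"
    using assms by linarith
  then have "isCont (deriv (kummerM (a + 1) (b + 1))) s"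
    by (rule DERIV_isCont[OF deriv_kummerM_has_real_derivative(1)])
  then have "isCont (\<lambda>s. a / b * deriv (kummerM (a + 1) (b + 1)) s) s"
    by (intro continuous_mult continuous_const)
  moreover have "deriv (deriv (kummerM a b)) = (\<lambda>s. a / b * deriv (kummerM (a + 1) (b + 1)) s)"
    using assms by (intro ext deriv_kummerM_has_real_derivative(2))
  ultimately show ?thesis
    by (simp only:)
qed

lemma kummerM_ode:
  assumes "\<bar>a\<bar> \<le> b" "b > 0"
  shows "s * deriv (deriv (kummerM a b)) s + (b - s) * deriv (kummerM a b) s - a * kummerM a b s = 0"
proof -
  define c where "c = kummer_coeff a b"
  have sum_c: "summable (\<lambda>k. c k * x ^ k)" for x
    unfolding c_def using assms(1) by (rule summable_kummer)
  have sum_d: "summable (\<lambda>k. diffs c k * x ^ k)" for x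
    using sum_c by (rule termdiff_converges_all)
  have M: "kummerM a b = (\<lambda>x. \<Sum>k. c k * x ^ k)"
    unfolding c_def by (intro ext kummerM_eq_suminf)
  have M': "deriv (kummerM a b) = (\<lambda>x. \<Sum>k. diffs c k * x ^ k)"
    unfolding M using sum_c by (rule deriv_power_series)
  have M'': "deriv (deriv (kummerM a b)) = (\<lambda>x. \<Sum>k. diffs (diffs c) k * x ^ k)"
    unfolding M' using sum_d by (rule deriv_power_series)
  have "(\<lambda>k. real k * diffs c k * s ^ k + b * (diffs c k * s ^ k) - (real k * c k * s ^ k + a * (c k * s ^ k)))
      sums (s * deriv (deriv (kummerM a b)) s + b * deriv (kummerM a b) s
            - (s * deriv (kummerM a b) s + a * kummerM a b s))"
    unfolding M'' unfolding M' unfolding M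
    by (intro sums_add sums_diff sums_mult power_series_x_times_diffs_sums summable_sums
        sum_c sum_d termdiff_converges_all)
  moreover have "real k * diffs c k + b * diffs c k = real k * c k + a * c k" for k
    using kummer_coeff_Suc[OF assms(2), of k a]
    by (simp add: c_def diffs_def algebra_simps)
  then have "real k * diffs c k * s ^ k + b * (diffs c k * s ^ k) - (real k * c k * s ^ k + a * (c k * s ^ k)) = 0" for k
    by (metis (no_types) distrib_right mult.assoc diff_self)
  ultimately show ?thesis
    by (simp add: sums_iff algebra_simps)
qed

section \<open>The positive zero of M(a, b, .) for -1 < a < 0\<close>

lemma kummerM_0 [simp]: "kummerM a b 0 = 1"
  by (simp add: kummerM_eq_suminf)

lemma isCont_kummerM:
  assumes "\<bar>a\<bar> \<le> b"
  shows "isCont (kummerM a b) s"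
  using assms by (rule DERIV_isCont[OF kummerM_has_real_derivative])

lemma kummerM_ge_one:
  assumes "0 < a" "a \<le> b" "0 \<le> s"
  shows "1 \<le> kummerM a b s"
proof -
  have "0 \<le> kummer_coeff a b k * s ^ k" for k
    using assms by (auto simp: kummer_coeff_def
        intro!: divide_nonneg_nonneg mult_nonneg_nonneg pochhammer_nonneg zero_le_power)
  then have "sum (\<lambda>k. kummer_coeff a b k * s ^ k) {..<1} \<le> kummerM a b s"
    unfolding kummerM_eq_suminf using assms by (intro sum_le_suminf summable_kummer) auto
  then show ?thesis
    by simp
qed

lemma deriv_kummerM_le:
  assumes "-1 < a" "a < 0" "-a \<le> b" "0 \<le> s"
  shows "deriv (kummerM a b) s \<le> a / b"
proof -
  have "a / b < 0"
    using assms by (simp add: divide_neg_pos)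
  moreover have "1 \<le> kummerM (a + 1) (b + 1) s"
    using assms by (intro kummerM_ge_one) auto
  ultimately have "a / b * kummerM (a + 1) (b + 1) s \<le> a / b * 1"
    by (intro mult_left_mono_neg) auto
  moreover have "\<bar>a\<bar> \<le> b"
    using assms by linarith
  ultimately show ?thesis
    by (simp add: deriv_kummerM)
qed

lemma deriv_kummerM_neg:
  assumes "-1 < a" "a < 0" "-a \<le> b" "0 \<le> s"
  shows "deriv (kummerM a b) s < 0"
proof -
  have "a / b < 0"
    using assms by (simp add: divide_neg_pos)
  then show ?thesis
    using deriv_kummerM_le[OF assms] by linarith
qed

lemma kummerM_strict_decreasing:
  assumes "-1 < a" "a < 0" "-a \<le> b" "0 \<le> s" "s < t"
  shows "kummerM a b t < kummerM a b s"
proof (rule DERIV_neg_imp_decreasing[OF \<open>s < t\<close>])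
  fix x assume "s \<le> x"
  then show "\<exists>y. (kummerM a b has_real_derivative y) (at x) \<and> y < 0"
    using assms deriv_kummerM_neg[of a b x]
    by (intro exI[of _ "deriv (kummerM a b) x"] conjI kummerM_has_real_derivative) auto
qed

lemma kummerM_le_linear:
  assumes "-1 < a" "a < 0" "-a \<le> b" "0 \<le> s"
  shows "kummerM a b s \<le> 1 + a / b * s"
proof -
  have "kummerM a b s - a / b * s \<le> kummerM a b 0 - a / b * 0"
  proof (rule DERIV_nonpos_imp_nonincreasing[OF \<open>0 \<le> s\<close>])
    fix x :: real assume "0 \<le> x"
    have "\<bar>a\<bar> \<le> b"
      using assms by linarith
    then have "((\<lambda>x. kummerM a b x - a / b * x) has_real_derivative deriv (kummerM a b) x - a / b * 1) (at x)"
      by (intro DERIV_diff DERIV_cmult DERIV_ident kummerM_has_real_derivative)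
    then show "\<exists>y. ((\<lambda>x. kummerM a b x - a / b * x) has_real_derivative y) (at x) \<and> y \<le> 0"
      using assms \<open>0 \<le> x\<close> deriv_kummerM_le[of a b x] by auto
  qed
  then show ?thesis
    by simp
qed

lemma kummerM_unique_positive_zero:
  assumes "-1 < a" "a < 0" "-a \<le> b"
  shows "\<exists>!s. s > 0 \<and> kummerM a b s = 0"
proof -
  have "b > 0"
    using assms by linarith
  then have "0 < - b / a" "1 + a / b * (- b / a) = 0"
    using assms by (simp_all add: zero_less_divide_iff divide_pos_neg)
  then have "kummerM a b (- b / a) \<le> 0"
    using assms kummerM_le_linear[of a b "- b / a"] by simp
  then obtain s where "0 \<le> s" "kummerM a b s = 0"
    using IVT2[of "kummerM a b" "- b / a" 0 0] assms isCont_kummerM[of a b] \<open>0 < - b / a\<close>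
    by auto
  moreover have "s \<noteq> 0"
    using \<open>kummerM a b s = 0\<close> by auto
  ultimately show ?thesis
  proof (intro ex1I[of _ s])
    fix t assume "t > 0 \<and> kummerM a b t = 0"
    then show "t = s"
      using assms \<open>0 \<le> s\<close> \<open>kummerM a b s = 0\<close>
        kummerM_strict_decreasing[of a b s t] kummerM_strict_decreasing[of a b t s]
      by (cases t s rule: linorder_cases) auto
  qed auto
qed

definition kummer_radial :: "real \<Rightarrow> real \<Rightarrow> real \<Rightarrow> real" where
  "kummer_radial a b r = kummerM a b (r\<^sup>2 / 4)"

lemma kummer_radial_nonneg:
  assumes "-1 < a" "a < 0" "-a \<le> b" "0 \<le> s" "kummerM a b s = 0" "0 \<le> r" "r \<le> 2 * sqrt s"
  shows "0 \<le> kummer_radial a b r"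
proof -
  have "r\<^sup>2 \<le> (2 * sqrt s)\<^sup>2"
    using assms by (intro power_mono) auto
  then have "r\<^sup>2 / 4 \<le> s"
    using assms by (simp add: power_mult_distrib)
  then have "kummerM a b s \<le> kummerM a b (r\<^sup>2 / 4)"
    using assms kummerM_strict_decreasing[of a b "r\<^sup>2 / 4" s] by (cases "r\<^sup>2 / 4 = s") auto
  then show ?thesis
    using assms by (simp add: kummer_radial_def)
qed

lemma kummer_radial_has_derivatives:
  assumes "\<bar>a\<bar> \<le> b"
  shows "(kummer_radial a b has_real_derivative deriv (kummerM a b) (r\<^sup>2 / 4) * (r / 2)) (at r)"
    and "((\<lambda>r. deriv (kummerM a b) (r\<^sup>2 / 4) * (r / 2)) has_real_derivative
          deriv (deriv (kummerM a b)) (r\<^sup>2 / 4) * (r / 2)\<^sup>2 + deriv (kummerM a b) (r\<^sup>2 / 4) / 2) (at r)"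
proof -
  have sq: "((\<lambda>r. r\<^sup>2 / 4) has_real_derivative r / 2) (at r)"
    by (auto intro!: derivative_eq_intros)
  have half: "((\<lambda>r. r / 2) has_real_derivative 1 / 2) (at r)"
    by (auto intro!: derivative_eq_intros)
  show "(kummer_radial a b has_real_derivative deriv (kummerM a b) (r\<^sup>2 / 4) * (r / 2)) (at r)"
    unfolding kummer_radial_def[abs_def]
    using DERIV_chain2[OF kummerM_has_real_derivative[OF assms] sq] .
  show "((\<lambda>r. deriv (kummerM a b) (r\<^sup>2 / 4) * (r / 2)) has_real_derivative
      deriv (deriv (kummerM a b)) (r\<^sup>2 / 4) * (r / 2)\<^sup>2 + deriv (kummerM a b) (r\<^sup>2 / 4) / 2) (at r)"
    by (rule DERIV_cong[OF DERIV_mult[OF DERIV_chain2[OF deriv_kummerM_has_real_derivative(1)[OF assms] sq] half]])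
      (simp add: power2_eq_square)
qed

lemma deriv_kummer_radial:
  assumes "\<bar>a\<bar> \<le> b"
  shows "deriv (kummer_radial a b) = (\<lambda>r. deriv (kummerM a b) (r\<^sup>2 / 4) * (r / 2))"
    and "deriv (deriv (kummer_radial a b)) r
           = deriv (deriv (kummerM a b)) (r\<^sup>2 / 4) * (r / 2)\<^sup>2 + deriv (kummerM a b) (r\<^sup>2 / 4) / 2"
proof -
  show first: "deriv (kummer_radial a b) = (\<lambda>r. deriv (kummerM a b) (r\<^sup>2 / 4) * (r / 2))"
    using kummer_radial_has_derivatives(1)[OF assms] by (intro ext DERIV_imp_deriv)
  show "deriv (deriv (kummer_radial a b)) r
      = deriv (deriv (kummerM a b)) (r\<^sup>2 / 4) * (r / 2)\<^sup>2 + deriv (kummerM a b) (r\<^sup>2 / 4) / 2"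
    unfolding first using kummer_radial_has_derivatives(2)[OF assms] by (rule DERIV_imp_deriv)
qed

lemma kummer_radial_has_real_derivative:
  assumes "\<bar>a\<bar> \<le> b"
  shows "(kummer_radial a b has_real_derivative deriv (kummer_radial a b) r) (at r)"
    and "(deriv (kummer_radial a b) has_real_derivative deriv (deriv (kummer_radial a b)) r) (at r)"
  unfolding deriv_kummer_radial(2)[OF assms] unfolding deriv_kummer_radial(1)[OF assms]
  using kummer_radial_has_derivatives[OF assms] .

lemma continuous_on_kummer_radial:
  assumes "\<bar>a\<bar> \<le> b"
  shows "continuous_on S (kummer_radial a b)"
  using DERIV_isCont[OF kummer_radial_has_real_derivative(1)[OF assms]]
  by (rule continuous_at_imp_continuous_on[OF ballI])

lemma kummer_radial_at_0:
  assumes "\<bar>a\<bar> \<le> b"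
  shows "kummer_radial a b 0 = 1" and "deriv (kummer_radial a b) 0 = 0"
  using assms by (simp_all add: kummer_radial_def deriv_kummer_radial(1))

lemma kummer_radial_2_sqrt:
  assumes "\<bar>a\<bar> \<le> b" "0 \<le> s"
  shows "kummer_radial a b (2 * sqrt s) = kummerM a b s"
    and "deriv (kummer_radial a b) (2 * sqrt s) = deriv (kummerM a b) s * sqrt s"
  using assms by (simp_all add: kummer_radial_def deriv_kummer_radial(1) power_mult_distrib)

lemma isCont_deriv_deriv_kummer_radial:
  assumes "\<bar>a\<bar> \<le> b"
  shows "isCont (deriv (deriv (kummer_radial a b))) r"
proof -
  have "deriv (deriv (kummer_radial a b))
      = (\<lambda>r. deriv (deriv (kummerM a b)) (r\<^sup>2 / 4) * (r / 2)\<^sup>2 + deriv (kummerM a b) (r\<^sup>2 / 4) / 2)"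
    using assms by (intro ext deriv_kummer_radial(2))
  moreover have "isCont (\<lambda>r. deriv (deriv (kummerM a b)) (r\<^sup>2 / 4)) r"
    by (rule isCont_o2[OF _ isCont_deriv_deriv_kummerM[OF assms]]) (auto intro!: continuous_intros)
  moreover have "isCont (\<lambda>r. deriv (kummerM a b) (r\<^sup>2 / 4)) r"
    by (rule isCont_o2[OF _ DERIV_isCont[OF deriv_kummerM_has_real_derivative(1)[OF assms]]])
      (auto intro!: continuous_intros)
  ultimately show ?thesis
    by (auto intro!: continuous_intros)
qed

lemma kummer_radial_ode:
  assumes "\<bar>a\<bar> \<le> b" "b > 0" "r \<noteq> 0"
  shows "deriv (deriv (kummer_radial a b)) r + ((2 * b - 1) / r - r / 2) * deriv (kummer_radial a b) r
           - a * kummer_radial a b r = 0"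
proof -
  define s where "s = r\<^sup>2 / 4"
  have "deriv (deriv (kummer_radial a b)) r + ((2 * b - 1) / r - r / 2) * deriv (kummer_radial a b) r
      - a * kummer_radial a b r
      = s * deriv (deriv (kummerM a b)) s + (b - s) * deriv (kummerM a b) s - a * kummerM a b s"
    unfolding deriv_kummer_radial(2)[OF assms(1)] unfolding deriv_kummer_radial(1)[OF assms(1)]
    using assms(3) by (simp add: kummer_radial_def s_def field_simps power2_eq_square)
  also have "\<dots> = 0"
    using assms(1,2) by (rule kummerM_ode)
  finally show ?thesis .
qed

lemma kummer_radial_profile_ode:
  assumes "n \<ge> 1" "r \<noteq> 0"
  shows "deriv (deriv (kummer_radial (-1/2) (real n / 2))) r
           + ((real n - 1) / r - r / 2) * deriv (kummer_radial (-1/2) (real n / 2)) r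
           + kummer_radial (-1/2) (real n / 2) r / 2 = 0"
  using kummer_radial_ode[of "-1/2" "real n / 2" r] assms by simp

section \<open>The singular initial value problem at r = 0\<close>

text \<open>The weight e^(-R r) absorbs the anti-damping term (r/2) W' on [0, R); the singular term
  (\<kappa>/r) W' is damping because \<kappa> \<ge> 0.\<close>

lemma radial_energy_has_nonpos_derivative:
  fixes W W' W'' :: "real \<Rightarrow> real" and \<kappa> R r :: real
  assumes "\<kappa> \<ge> 0" "0 < r" "r < R"
    and W': "(W has_real_derivative W' r) (at r)" and W'': "(W' has_real_derivative W'' r) (at r)"
    and ode: "W'' r + (\<kappa> / r - r / 2) * W' r + W r / 2 = 0"
  shows "\<exists>y. ((\<lambda>r. (W' r ^ 2 / 2 + W r ^ 2 / 4) * exp (- R * r)) has_real_derivative y) (at r) \<and> y \<le> 0"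
proof -
  define D where "D = W' r * W'' r + W r * W' r / 2 - R * (W' r ^ 2 / 2 + W r ^ 2 / 4)"
  have "((\<lambda>r. (W' r ^ 2 / 2 + W r ^ 2 / 4) * exp (- R * r)) has_real_derivative
      (W' r * W'' r + W r * W' r / 2) * exp (- R * r) + (W' r ^ 2 / 2 + W r ^ 2 / 4) * (exp (- R * r) * - R)) (at r)"
    by (rule derivative_eq_intros W' W'' refl | simp)+
  then have E': "((\<lambda>r. (W' r ^ 2 / 2 + W r ^ 2 / 4) * exp (- R * r)) has_real_derivative D * exp (- R * r)) (at r)"
    by (simp add: D_def algebra_simps)
  have "W' r * (W'' r + (\<kappa> / r - r / 2) * W' r + W r / 2) = 0"
    using ode by simp
  then have "D = - (\<kappa> / r) * W' r ^ 2 + (r - R) / 2 * W' r ^ 2 - R / 4 * W r ^ 2"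
    unfolding D_def by (simp add: power2_eq_square algebra_simps)
  moreover have "- (\<kappa> / r) * W' r ^ 2 \<le> 0" "(r - R) / 2 * W' r ^ 2 \<le> 0" "0 \<le> R / 4 * W r ^ 2"
    using assms by (auto intro: mult_nonpos_nonneg)
  ultimately have "D \<le> 0"
    by linarith
  then have "D * exp (- R * r) \<le> 0"
    by (rule mult_nonpos_nonneg) simp
  with E' show ?thesis
    by (intro exI[of _ "D * exp (- R * r)"] conjI)
qed

lemma radial_ode_zero_data_imp_zero:
  fixes W W' W'' :: "real \<Rightarrow> real" and \<kappa> R :: real
  assumes "\<kappa> \<ge> 0"
    and W': "\<And>r. r \<in> {0..<R} \<Longrightarrow> (W has_real_derivative W' r) (at r within {0..<R})"
    and W'': "\<And>r. r \<in> {0..<R} \<Longrightarrow> (W' has_real_derivative W'' r) (at r within {0..<R})"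
    and ode: "\<And>r. r \<in> {0<..<R} \<Longrightarrow> W'' r + (\<kappa> / r - r / 2) * W' r + W r / 2 = 0"
    and "W 0 = 0" "W' 0 = 0" and "x \<in> {0..<R}"
  shows "W x = 0"
proof -
  define E where "E r = (W' r ^ 2 / 2 + W r ^ 2 / 4) * exp (- R * r)" for r
  have "continuous_on {0..<R} E"
    unfolding E_def using W' W''
    by (intro continuous_intros DERIV_continuous_on[of "{0..<R}"]) auto
  then have E_cont: "continuous_on {0..x} E"
    by (rule continuous_on_subset) (use \<open>x \<in> {0..<R}\<close> in auto)
  have E_decr: "\<exists>y. (E has_real_derivative y) (at r) \<and> y \<le> 0" if "0 < r" "r < x" for r
  proof -
    have r: "r \<in> {0<..<R}" and "at r within {0..<R} = at r"
      using that \<open>x \<in> {0..<R}\<close> by (auto intro!: at_within_interior)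
    then have "(W has_real_derivative W' r) (at r)" "(W' has_real_derivative W'' r) (at r)"
      using W'[of r] W''[of r] by auto
    then show ?thesis
      unfolding E_def[abs_def] using \<open>\<kappa> \<ge> 0\<close> r ode[OF r]
      by (intro radial_energy_has_nonpos_derivative) auto
  qed
  have "E x \<le> E 0"
    using \<open>x \<in> {0..<R}\<close> by (intro DERIV_nonpos_imp_decreasing_open[OF _ E_decr E_cont]) auto
  then have "W' x ^ 2 / 2 + W x ^ 2 / 4 \<le> 0"
    using \<open>W 0 = 0\<close> \<open>W' 0 = 0\<close> by (simp add: E_def mult_le_0_iff)
  then have "W x ^ 2 \<le> 0"
    using zero_le_power2[of "W' x"] by linarith
  then show ?thesis
    by simp
qed

section \<open>Solutions of the profile problem\<close>

text \<open>The boundary condition U'(R) = -sqrt 2 for U = l V, since V'(2 sqrt s) = M'(s) sqrt s.\<close>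

lemma sqrt2_slope_iff:
  fixes d s l :: real
  assumes "d < 0" "s > 0"
  shows "l * (d * sqrt s) = - sqrt 2 \<longleftrightarrow> l = 1 / (- sqrt (s / 2) * d)"
  using assms by (auto simp: real_sqrt_divide field_simps)

lemma scaled_kummer_radial_solves_profile_ode:
  fixes n :: nat and l R :: real
  defines "V \<equiv> kummer_radial (-1/2) (real n / 2)"
  assumes "n \<ge> 1"
  shows "\<exists>U1 U2.
        (\<forall>r\<in>{0..<R}. ((\<lambda>r. l * V r) has_real_derivative U1 r) (at r within {0..<R})) \<and>
        (\<forall>r\<in>{0..<R}. (U1 has_real_derivative U2 r) (at r within {0..<R})) \<and>
        continuous_on {0..<R} U2 \<and>
        (\<forall>r\<in>{0<..<R}. U2 r + ((real n - 1) / r - r / 2) * U1 r + l * V r / 2 = 0) \<and>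
        U1 0 = 0"
proof -
  have par: "\<bar>-1/2\<bar> \<le> real n / 2"
    using assms by simp
  show ?thesis
  proof (intro exI conjI ballI)
    fix r
    show "((\<lambda>r. l * V r) has_real_derivative l * deriv V r) (at r within {0..<R})"
      and "((\<lambda>r. l * deriv V r) has_real_derivative l * deriv (deriv V) r) (at r within {0..<R})"
      unfolding V_def using kummer_radial_has_real_derivative[OF par]
      by (auto intro: has_field_derivative_at_within[OF DERIV_cmult])
    assume "r \<in> {0<..<R}"
    then have "l * (deriv (deriv V) r + ((real n - 1) / r - r / 2) * deriv V r + V r / 2) = 0"
      unfolding V_def using kummer_radial_profile_ode[OF \<open>n \<ge> 1\<close>, of r] by simp
    then show "l * deriv (deriv V) r + ((real n - 1) / r - r / 2) * (l * deriv V r) + l * V r / 2 = 0"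
      by (simp add: algebra_simps)
  next
    show "continuous_on {0..<R} (\<lambda>r. l * deriv (deriv V) r)"
      unfolding V_def using isCont_deriv_deriv_kummer_radial[OF par]
      by (intro continuous_intros continuous_at_imp_continuous_on ballI)
    show "l * deriv V 0 = 0"
      unfolding V_def using kummer_radial_at_0[OF par] by simp
  qed
qed

lemma scaled_kummer_radial_boundary_slope:
  fixes n :: nat and s\<^sub>0 :: real
  defines "M \<equiv> kummerM (-1/2) (real n / 2)"
  defines "l \<equiv> 1 / (- sqrt (s\<^sub>0 / 2) * deriv M s\<^sub>0)"
  assumes "n \<ge> 1" "s\<^sub>0 > 0"
  shows "((\<lambda>r. l * kummer_radial (-1/2) (real n / 2) r) has_real_derivative - sqrt 2)
           (at_left (2 * sqrt s\<^sub>0))"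
proof -
  have par: "\<bar>-1/2\<bar> \<le> real n / 2"
    using assms by simp
  have "deriv M s\<^sub>0 < 0"
    unfolding M_def using assms by (intro deriv_kummerM_neg) auto
  moreover have "deriv (kummer_radial (-1/2) (real n / 2)) (2 * sqrt s\<^sub>0) = deriv M s\<^sub>0 * sqrt s\<^sub>0"
    unfolding M_def using par by (rule kummer_radial_2_sqrt(2)) (use assms in simp)
  ultimately have "l * deriv (kummer_radial (-1/2) (real n / 2)) (2 * sqrt s\<^sub>0) = - sqrt 2"
    using sqrt2_slope_iff[OF \<open>deriv M s\<^sub>0 < 0\<close> \<open>s\<^sub>0 > 0\<close>, of l, unfolded l_def[symmetric]] by simp
  then show ?thesis
    using has_field_derivative_at_within[OF DERIV_cmult[OF kummer_radial_has_real_derivative(1)[OF par]],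
        of l "2 * sqrt s\<^sub>0" "{..<2 * sqrt s\<^sub>0}"]
    by simp
qed

lemma profile_sol_kummer_radial:
  fixes n :: nat and s\<^sub>0 :: real
  defines "M \<equiv> kummerM (-1/2) (real n / 2)"
  defines "l \<equiv> 1 / (- sqrt (s\<^sub>0 / 2) * deriv M s\<^sub>0)"
  assumes "n \<ge> 1" "s\<^sub>0 > 0" "M s\<^sub>0 = 0"
  shows "profile_sol n l (2 * sqrt s\<^sub>0) (\<lambda>r. l * kummer_radial (-1/2) (real n / 2) r)"
proof -
  define V where "V = kummer_radial (-1/2) (real n / 2)"
  define R where "R = 2 * sqrt s\<^sub>0"
  have par: "\<bar>-1/2\<bar> \<le> real n / 2"
    using assms by simp
  have "deriv M s\<^sub>0 < 0"
    unfolding M_def using assms by (intro deriv_kummerM_neg) auto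
  then have "l > 0"
    unfolding l_def using assms by (simp add: mult_pos_neg)
  have "R > 0" "R\<^sup>2 / 4 = s\<^sub>0"
    unfolding R_def using assms by (simp_all add: power_mult_distrib)
  have "V r \<ge> 0" if "r \<in> {0..R}" for r
    unfolding V_def using assms that
    by (intro kummer_radial_nonneg[where s = s\<^sub>0]) (auto simp: R_def M_def)
  moreover have "continuous_on {0..R} (\<lambda>r. l * V r)"
    unfolding V_def using continuous_on_kummer_radial[OF par] by (rule continuous_on_mult_left)
  moreover have "\<exists>U1 U2.
        (\<forall>r\<in>{0..<R}. ((\<lambda>r. l * V r) has_real_derivative U1 r) (at r within {0..<R})) \<and>
        (\<forall>r\<in>{0..<R}. (U1 has_real_derivative U2 r) (at r within {0..<R})) \<and>
        continuous_on {0..<R} U2 \<and>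
        (\<forall>r\<in>{0<..<R}. U2 r + ((real n - 1) / r - r / 2) * U1 r + l * V r / 2 = 0) \<and>
        U1 0 = 0"
    unfolding V_def using \<open>n \<ge> 1\<close> by (rule scaled_kummer_radial_solves_profile_ode)
  moreover have "V R = 0"
    unfolding V_def R_def kummer_radial_2_sqrt(1)[OF par less_imp_le[OF \<open>s\<^sub>0 > 0\<close>]]
    using assms(5) unfolding M_def .
  moreover have "((\<lambda>r. l * V r) has_real_derivative - sqrt 2) (at_left R)"
    unfolding V_def R_def l_def M_def using assms(3,4) by (rule scaled_kummer_radial_boundary_slope)
  ultimately show ?thesis
    unfolding profile_sol_def R_def[symmetric]
    using \<open>l > 0\<close> \<open>R > 0\<close> kummer_radial_at_0(1)[OF par] by (auto simp: V_def)
qed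

lemma profile_sol_eq_kummer_radial:
  assumes "n \<ge> 1" "profile_sol n l R U" "x \<in> {0..R}"
  shows "U x = l * kummer_radial (-1/2) (real n / 2) x"
proof -
  define V where "V = kummer_radial (-1/2) (real n / 2)"
  have par: "\<bar>-1/2\<bar> \<le> real n / 2"
    using assms by simp
  obtain U1 U2 where
    U1: "\<And>r. r \<in> {0..<R} \<Longrightarrow> (U has_real_derivative U1 r) (at r within {0..<R})" and
    U2: "\<And>r. r \<in> {0..<R} \<Longrightarrow> (U1 has_real_derivative U2 r) (at r within {0..<R})" and
    ode: "\<And>r. r \<in> {0<..<R} \<Longrightarrow> U2 r + ((real n - 1) / r - r / 2) * U1 r + U r / 2 = 0" and
    "U1 0 = 0"
    using assms(2) unfolding profile_sol_def by blast
  have "R > 0" "U 0 = l" "continuous_on {0..R} U"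
    using assms(2) unfolding profile_sol_def by auto
  have "U y - l * V y = 0" if "y \<in> {0..<R}" for y
  proof (rule radial_ode_zero_data_imp_zero[where \<kappa> = "real n - 1" and R = R and x = y
        and W = "\<lambda>r. U r - l * V r" and W' = "\<lambda>r. U1 r - l * deriv V r" and W'' = "\<lambda>r. U2 r - l * deriv (deriv V) r"])
    fix r assume r: "r \<in> {0..<R}"
    show "((\<lambda>r. U r - l * V r) has_real_derivative U1 r - l * deriv V r) (at r within {0..<R})"
      and "((\<lambda>r. U1 r - l * deriv V r) has_real_derivative U2 r - l * deriv (deriv V) r) (at r within {0..<R})"
      unfolding V_def using U1[OF r] U2[OF r] kummer_radial_has_real_derivative[OF par]
      by (auto intro!: DERIV_diff has_field_derivative_at_within[OF DERIV_cmult])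
  next
    fix r assume r: "r \<in> {0<..<R}"
    define c where "c = (real n - 1) / r - r / 2"
    have "U2 r - l * deriv (deriv V) r + c * (U1 r - l * deriv V r) + (U r - l * V r) / 2
        = (U2 r + c * U1 r + U r / 2) - l * (deriv (deriv V) r + c * deriv V r + V r / 2)"
      by (simp add: field_simps)
    also have "\<dots> = 0"
      unfolding c_def V_def using ode[OF r] kummer_radial_profile_ode[OF \<open>n \<ge> 1\<close>, of r] r by simp
    finally show "U2 r - l * deriv (deriv V) r + ((real n - 1) / r - r / 2) * (U1 r - l * deriv V r)
        + (U r - l * V r) / 2 = 0"
      unfolding c_def .
  qed (use that assms \<open>U 0 = l\<close> \<open>U1 0 = 0\<close> kummer_radial_at_0[OF par] in \<open>auto simp: V_def\<close>)
  moreover have "continuous_on {0..R} (\<lambda>r. U r - l * V r)"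
    unfolding V_def using \<open>continuous_on {0..R} U\<close>
    by (rule continuous_on_diff[OF _ continuous_on_mult_left[OF continuous_on_kummer_radial[OF par]]])
  ultimately have "U x - l * V x = 0"
    using assms(3) \<open>R > 0\<close>
    by (intro continuous_constant_on_closure[of "{0..<R}" "\<lambda>r. U r - l * V r" 0 x]) auto
  then show ?thesis
    by (simp add: V_def)
qed

lemma profile_sol_radius:
  fixes n :: nat
  defines "M \<equiv> kummerM (-1/2) (real n / 2)"
  assumes "n \<ge> 1" "profile_sol n l R U" "s\<^sub>0 > 0" "M s\<^sub>0 = 0"
  shows "R = 2 * sqrt s\<^sub>0"
proof -
  have "l > 0" "R > 0" "U R = 0"
    using assms(3) unfolding profile_sol_def by auto
  moreover have "U R = l * M (R\<^sup>2 / 4)"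
    unfolding M_def kummer_radial_def[symmetric] using assms(2,3)
    by (rule profile_sol_eq_kummer_radial) (use \<open>R > 0\<close> in simp)
  ultimately have "R\<^sup>2 / 4 > 0" "M (R\<^sup>2 / 4) = 0"
    by simp_all
  moreover have "\<exists>!s. s > 0 \<and> M s = 0"
    unfolding M_def by (rule kummerM_unique_positive_zero) (use assms in auto)
  ultimately have "R\<^sup>2 / 4 = s\<^sub>0"
    using assms(4,5) by blast
  then show ?thesis
    using \<open>R > 0\<close> real_sqrt_mult[of 4 s\<^sub>0] real_sqrt_abs[of R] by (simp add: mult.commute)
qed

lemma profile_sol_slope:
  assumes "n \<ge> 1" "profile_sol n l R U"
  shows "l * deriv (kummer_radial (-1/2) (real n / 2)) R = - sqrt 2"
proof -
  define V where "V = kummer_radial (-1/2) (real n / 2)"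
  have par: "\<bar>-1/2\<bar> \<le> real n / 2"
    using assms by simp
  have U_eq: "U x = l * V x" if "x \<in> {0..R}" for x
    unfolding V_def using assms that by (rule profile_sol_eq_kummer_radial)
  have "R > 0" and U'_R: "(U has_real_derivative - sqrt 2) (at_left R)"
    using assms(2) unfolding profile_sol_def by auto
  have "eventually (\<lambda>x. U x = l * V x) (at_left R)"
    using eventually_at_left_real[OF \<open>R > 0\<close>] by eventually_elim (auto intro: U_eq)
  then have "((\<lambda>x. l * V x) has_real_derivative - sqrt 2) (at_left R)"
    using U'_R U_eq[of R] \<open>R > 0\<close> has_field_derivative_cong_eventually by fastforce
  moreover have "((\<lambda>r. l * V r) has_real_derivative l * deriv V R) (at_left R)"
    unfolding V_def
    by (rule has_field_derivative_at_within[OF DERIV_cmult[OF kummer_radial_has_real_derivative(1)[OF par]]])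
  ultimately show ?thesis
    unfolding V_def using has_field_derivative_unique trivial_limit_at_left_real by blast
qed

lemma profile_sol_amplitude:
  fixes n :: nat
  defines "M \<equiv> kummerM (-1/2) (real n / 2)"
  assumes "n \<ge> 1" "profile_sol n l R U" "s\<^sub>0 > 0" "M s\<^sub>0 = 0"
  shows "l = 1 / (- sqrt (s\<^sub>0 / 2) * deriv M s\<^sub>0)"
proof -
  have "deriv M s\<^sub>0 < 0"
    unfolding M_def using assms by (intro deriv_kummerM_neg) auto
  moreover have "deriv (kummer_radial (-1/2) (real n / 2)) R = deriv M s\<^sub>0 * sqrt s\<^sub>0"
    unfolding profile_sol_radius[OF assms(2-5)[unfolded M_def]] M_def
    by (rule kummer_radial_2_sqrt(2)) (use assms in simp_all)
  ultimately show ?thesis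
    using profile_sol_slope[OF assms(2,3)] sqrt2_slope_iff[OF _ \<open>s\<^sub>0 > 0\<close>] by simp
qed

theorem lemma6p8:
  fixes n :: nat
  assumes "n \<ge> 1"
  shows "(\<exists>!s. s > 0 \<and> kummerM (-1/2) (real n / 2) s = 0) \<and>
    (let s\<^sub>0 = (THE s. s > 0 \<and> kummerM (-1/2) (real n / 2) s = 0);
         l\<^sub>0 = 1 / (- sqrt (s\<^sub>0 / 2) * deriv (\<lambda>s. kummerM (-1/2) (real n / 2) s) s\<^sub>0);
         R\<^sub>0 = 2 * sqrt s\<^sub>0;
         U\<^sub>0 = (\<lambda>r. l\<^sub>0 * kummerM (-1/2) (real n / 2) (r\<^sup>2 / 4))
     in profile_sol n l\<^sub>0 R\<^sub>0 U\<^sub>0 \<and>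
        (\<forall>l R U. profile_sol n l R U \<longrightarrow>
           l = l\<^sub>0 \<and> R = R\<^sub>0 \<and> (\<forall>r\<in>{0..R}. U r = U\<^sub>0 r)))"
proof -
  have zero: "\<exists>!s. s > 0 \<and> kummerM (-1/2) (real n / 2) s = 0"
    by (rule kummerM_unique_positive_zero) (use assms in auto)
  define s\<^sub>0 where "s\<^sub>0 = (THE s. s > 0 \<and> kummerM (-1/2) (real n / 2) s = 0)"
  have s\<^sub>0: "s\<^sub>0 > 0" "kummerM (-1/2) (real n / 2) s\<^sub>0 = 0"
    using theI'[OF zero] unfolding s\<^sub>0_def by auto
  define l\<^sub>0 where "l\<^sub>0 = 1 / (- sqrt (s\<^sub>0 / 2) * deriv (\<lambda>s. kummerM (-1/2) (real n / 2) s) s\<^sub>0)"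
  have radial: "kummerM (-1/2) (real n / 2) (r\<^sup>2 / 4) = kummer_radial (-1/2) (real n / 2) r" for r
    by (simp only: kummer_radial_def)
  show ?thesis
    unfolding Let_def s\<^sub>0_def[symmetric] l\<^sub>0_def[symmetric] radial
  proof (intro conjI allI impI ballI)
    show "profile_sol n l\<^sub>0 (2 * sqrt s\<^sub>0) (\<lambda>r. l\<^sub>0 * kummer_radial (-1/2) (real n / 2) r)"
      unfolding l\<^sub>0_def using assms s\<^sub>0 by (rule profile_sol_kummer_radial)
    fix l R U assume sol: "profile_sol n l R U"
    show "l = l\<^sub>0"
      unfolding l\<^sub>0_def using assms sol s\<^sub>0 by (rule profile_sol_amplitude)
    show "R = 2 * sqrt s\<^sub>0"
      using assms sol s\<^sub>0 by (rule profile_sol_radius)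
    fix r assume "r \<in> {0..R}"
    with sol show "U r = l\<^sub>0 * kummer_radial (-1/2) (real n / 2) r"
      using profile_sol_eq_kummer_radial[OF assms] \<open>l = l\<^sub>0\<close> by blast
  qed (rule zero)
qed

end
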